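(* For all $s\in\mathbb C\setminus\Lambda$, $\lambda\neq0$ and $A\in\mathbb R$, the secular determinant of the Mathieu–Hankel operator satisfies $\Delta(s;\lambda;A)=\Delta(s;-\lambda;-A)$. Consequently $\mathbf H(-A)$ is unitarily equivalent to $-\mathbf H(A)$. Furthermore, $s\mapsto\Delta(s;\lambda;0)$ is doubly periodic with periods $\omega$ and $i$.
   Context: Fix $T>0$, $\omega=2\pi/T$, $\Lambda=\{\omega n+i(m+\frac12):n,m\in\mathbb Z\}$. For $A\in\mathbb R$, the Mathieu–Hankel operator $\mathbf H(A)$ is the Hankel operator on $L^2(\mathbb R_+)$ with kernel $h_A(t)=p_A(\log t)/t$, $p_A(\xi)=A+\operatorname{Re}(\Gamma(1-i\omega)e^{i\omega\xi})$. For $s\in\mathbb C\setminus\Lambda$, $H(s;A)$ is the trace class operator on $\ell^2(\mathbb Z)$ with matrix $[H(s;A)]_{n,m}=\Gamma(\frac12-i(\omega n+s))\,\mathfrak s_{n-m}\,\Gamma(\frac12+i(\omega m+s))$, where $\mathfrak s_0=A$, $\mathfrak s_{\pm1}=\frac12$, $\mathfrak s_j=0$ otherwise (for real $s=k$ these are the Floquet–Bloch fibers of $\mathbf H(A)$), and $\Delta(s;\lambda;A)=\det(I-\lambda^{-1}H(s;A))$. *)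

theory Defs
  imports "HOL-Analysis.Analysis"
begin

definition mh_omega :: "real \<Rightarrow> real" where
  "mh_omega T = 2 * pi / T"

definition mh_Lambda :: "real \<Rightarrow> complex set" where
  "mh_Lambda T = {complex_of_real (mh_omega T * of_int n) + \<i> * (of_int m + 1/2) | n m :: int. True}"

definition mh_symbol :: "real \<Rightarrow> real \<Rightarrow> real \<Rightarrow> real" where
  "mh_symbol T A \<xi> = A + Re (Gamma (1 - \<i> * complex_of_real (mh_omega T))
                          * exp (\<i> * complex_of_real (mh_omega T * \<xi>)))"

definition mh_kernel :: "real \<Rightarrow> real \<Rightarrow> real \<Rightarrow> real" where
  "mh_kernel T A t = mh_symbol T A (ln t) / t"

definition hankel_op :: "(real \<Rightarrow> real) \<Rightarrow> (real \<Rightarrow> complex) \<Rightarrow> real \<Rightarrow> complex" where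
  "hankel_op h f t = (LINT s:{0<..}|lborel. complex_of_real (h (t + s)) * f s)"

text \<open>Square integrable functions on (0,oo) (values off (0,oo) are irrelevant).\<close>
definition L2pos :: "(real \<Rightarrow> complex) \<Rightarrow> bool" where
  "L2pos f \<longleftrightarrow> f \<in> borel_measurable lborel \<and> set_integrable lborel {0<..} (\<lambda>t. (norm (f t))\<^sup>2)"

definition L2pos_normsq :: "(real \<Rightarrow> complex) \<Rightarrow> real" where
  "L2pos_normsq f = (LINT t:{0<..}|lborel. (norm (f t))\<^sup>2)"

definition ae_eq_pos :: "(real \<Rightarrow> complex) \<Rightarrow> (real \<Rightarrow> complex) \<Rightarrow> bool" where
  "ae_eq_pos f g \<longleftrightarrow> (AE t in lborel. 0 < t \<longrightarrow> f t = g t)"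

definition unitarily_equiv_L2pos ::
  "((real \<Rightarrow> complex) \<Rightarrow> real \<Rightarrow> complex) \<Rightarrow> ((real \<Rightarrow> complex) \<Rightarrow> real \<Rightarrow> complex) \<Rightarrow> bool" where
  "unitarily_equiv_L2pos P Q \<longleftrightarrow>
     (\<exists>U. (\<forall>f. L2pos f \<longrightarrow> L2pos (U f))
        \<and> (\<forall>f g c. L2pos f \<longrightarrow> L2pos g \<longrightarrow>
              ae_eq_pos (U (\<lambda>x. f x + c * g x)) (\<lambda>x. U f x + c * U g x))
        \<and> (\<forall>f. L2pos f \<longrightarrow> L2pos_normsq (U f) = L2pos_normsq f)
        \<and> (\<forall>g. L2pos g \<longrightarrow> (\<exists>f. L2pos f \<and> ae_eq_pos (U f) g))
        \<and> (\<forall>f. L2pos f \<longrightarrow> ae_eq_pos (U (P f)) (Q (U f))))"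

definition mh_sfrak :: "real \<Rightarrow> int \<Rightarrow> complex" where
  "mh_sfrak A j = (if j = 0 then complex_of_real A else if j = 1 \<or> j = -1 then 1/2 else 0)"

definition mh_fiber :: "real \<Rightarrow> complex \<Rightarrow> real \<Rightarrow> int \<Rightarrow> int \<Rightarrow> complex" where
  "mh_fiber T s A n m =
     Gamma (1/2 - \<i> * (complex_of_real (mh_omega T * of_int n) + s))
     * mh_sfrak A (n - m)
     * Gamma (1/2 + \<i> * (complex_of_real (mh_omega T * of_int m) + s))"

definition det_on :: "'a set \<Rightarrow> ('a \<Rightarrow> 'a \<Rightarrow> complex) \<Rightarrow> complex" where
  "det_on S M = (\<Sum>p | p permutes S. of_int (sign p) * (\<Prod>i\<in>S. M i (p i)))"

text \<open>Fredholm determinant det(I - K) of a trace class matrix K on l^2(Z),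
  realised as the limit of the determinants of the finite sections indexed by {-N..N}
  (for trace class K these finite sections converge in trace norm).\<close>
definition fredholm_det_Z :: "(int \<Rightarrow> int \<Rightarrow> complex) \<Rightarrow> complex" where
  "fredholm_det_Z K =
     lim (\<lambda>N::nat. det_on {- int N .. int N} (\<lambda>n m. (if n = m then 1 else 0) - K n m))"

definition mh_Delta :: "real \<Rightarrow> complex \<Rightarrow> complex \<Rightarrow> real \<Rightarrow> complex" where
  "mh_Delta T s lam A = fredholm_det_Z (\<lambda>n m. mh_fiber T s A n m / lam)"

end

theory Submission
  imports Defs
begin

(* Replacing (lam, A) by (-lam, -A) conjugates the matrix I - H(s;A)/lam by diag((-1)^n), and,
   since Gamma(a+1) = a Gamma(a), replacing s by s + i conjugates I - H(s;0)/lam by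
   diag((-1)^n a_n) with a_n = 1/2 - i(omega n + s); diagonal similarities leave every finite
   section determinant unchanged. Replacing s by s + omega merely moves the window {-N..N} to
   {-N+1..N+1}. For A = 0 the matrix is unit tridiagonal, and by the reflection formula its
   off-diagonal products Gamma(a_k) Gamma(1-a_k) Gamma(a_(k+1)) Gamma(1-a_(k+1)) decay
   exponentially in |k|. Hence the finite section determinants are uniformly bounded, and
   expanding the two windows along their end rows shows that their determinants differ by
   terms tending to 0.
   The unitary dilation f(t) -> sqrt c f(c t) with c = exp(pi/omega) shifts log t by pi/omega,
   which flips the sign of the oscillating part of the symbol; so it intertwines H(-A) with
   -H(A). *)

section \<open>Determinants over finite index sets\<close>

lemma det_on_empty [simp]: "det_on {} M = 1"
  unfolding det_on_def by simp

lemma det_on_singleton [simp]: "det_on {a} M = M a a"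
  unfolding det_on_def by simp

lemma det_on_reindex:
  assumes f: "inj_on f S" and S: "finite S"
  shows "det_on (f ` S) M = det_on S (\<lambda>i j. M (f i) (f j))"
proof -
  have bij: "bij_betw f S (f ` S)" using f by (simp add: bij_betw_imageI)
  have map: "map_permutation S f p = (\<lambda>x. if x \<in> f ` S then f (p (inv_into S f x)) else x)" for p
    by (auto simp: map_permutation_def restrict_id_def fun_eq_iff)
  have "det_on (f ` S) M = (\<Sum>p | p permutes S. of_int (sign (map_permutation S f p))
           * (\<Prod>i\<in>f ` S. M i (map_permutation S f p i)))"
    unfolding det_on_def map
    by (rule sum.reindex_bij_betw[symmetric, OF bij_betw_permutations[OF bij]])
  also have "\<dots> = det_on S (\<lambda>i j. M (f i) (f j))"
    unfolding det_on_def
  proof (rule sum.cong[OF refl])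
    fix p assume "p \<in> {p. p permutes S}"
    then have p: "p permutes S" by simp
    have "(\<Prod>i\<in>f ` S. M i (map_permutation S f p i)) = (\<Prod>i\<in>S. M (f i) (f (p i)))"
      using f by (simp add: prod.reindex map_permutation_apply)
    then show "of_int (sign (map_permutation S f p)) * (\<Prod>i\<in>f ` S. M i (map_permutation S f p i))
             = of_int (sign p) * (\<Prod>i\<in>S. M (f i) (f (p i)))"
      by (simp add: sign_map_permutation[OF f p S])
  qed
  finally show ?thesis .
qed

lemma det_on_diagonal_similar:
  assumes "finite S" and "\<And>i. i \<in> S \<Longrightarrow> d i \<noteq> 0"
  shows "det_on S (\<lambda>i j. d i * M i j / d j) = det_on S M"
  unfolding det_on_def
proof (rule sum.cong[OF refl])
  fix p assume "p \<in> {p. p permutes S}"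
  then have p: "p permutes S" by simp
  have "(\<Prod>i\<in>S. d (p i)) = (\<Prod>i\<in>S. d i)"
    using prod.permute[OF p, of d] by (simp add: comp_def)
  moreover have "(\<Prod>i\<in>S. d i) \<noteq> 0" using assms by simp
  ultimately have "(\<Prod>i\<in>S. d i * M i (p i) / d (p i)) = (\<Prod>i\<in>S. M i (p i))"
    by (simp add: prod.distrib prod_dividef)
  then show "of_int (sign p) * (\<Prod>i\<in>S. d i * M i (p i) / d (p i)) = of_int (sign p) * (\<Prod>i\<in>S. M i (p i))"
    by simp
qed

lemma sign_prod_transpose_pendant:
  fixes M :: "'a \<Rightarrow> 'a \<Rightarrow> complex"
  assumes S: "finite S" and k: "k \<notin> S" and j: "j \<in> S" and q: "q permutes S - {j}"
  defines "p \<equiv> Transposition.transpose k j \<circ> q"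
  shows "of_int (sign p) * (\<Prod>i\<in>insert k S. M i (p i))
       = - (M k j * M j k) * (of_int (sign q) * (\<Prod>i\<in>S - {j}. M i (q i)))"
proof -
  have kj: "k \<noteq> j" using k j by auto
  have qk: "q k = k" and qj: "q j = j" using q k by (auto simp: permutes_not_in)
  have "sign p = - sign q"
    unfolding p_def using sign_compose[OF permutation_swap_id permutes_imp_permutation[OF _ q]] S kj
    by (simp add: sign_swap_id)
  moreover have "(\<Prod>i\<in>S - {j}. M i (p i)) = (\<Prod>i\<in>S - {j}. M i (q i))"
  proof (rule prod.cong[OF refl])
    fix i assume "i \<in> S - {j}"
    then have "q i \<in> S - {j}" using q by (metis permutes_in_image)
    then have "q i \<noteq> k" "q i \<noteq> j" using k by auto
    then show "M i (p i) = M i (q i)" by (simp add: p_def)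
  qed
  moreover have "(\<Prod>i\<in>insert k S. M i (p i)) = M k j * M j k * (\<Prod>i\<in>S - {j}. M i (p i))"
    using S k j qk qj kj by (simp add: prod.remove p_def)
  ultimately show ?thesis by simp
qed

lemma sum_permutes_transpose_pendant:
  fixes M :: "'a \<Rightarrow> 'a \<Rightarrow> complex"
  assumes S: "finite S" and k: "k \<notin> S" and j: "j \<in> S"
    and col: "\<And>i. i \<in> S - {j} \<Longrightarrow> M i k = 0"
  shows "(\<Sum>q | q permutes S. of_int (sign (Transposition.transpose k j \<circ> q))
            * (\<Prod>i\<in>insert k S. M i ((Transposition.transpose k j \<circ> q) i)))
       = - (M k j * M j k) * det_on (S - {j}) M"
    (is "(\<Sum>q | q permutes S. ?F q) = _")
proof -
  have "?F q = 0" if q: "q permutes S" and qj: "q j \<noteq> j" for q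
  proof -
    obtain i where i: "i \<in> S" "q i = j" using q j by (metis permutes_inverses(1) permutes_not_in)
    then have "i \<noteq> j" using qj by auto
    then have "M i ((Transposition.transpose k j \<circ> q) i) = 0" using i col by simp
    then have "(\<Prod>i\<in>insert k S. M i ((Transposition.transpose k j \<circ> q) i)) = 0"
      using S i by (intro prod_zero bexI[where x = i]) auto
    then show ?thesis by simp
  qed
  then have "(\<Sum>q | q permutes S. ?F q) = (\<Sum>q | q permutes S \<and> q j = j. ?F q)"
    using S by (intro sum.mono_neutral_right) (auto simp: finite_permutations)
  also have "{q. q permutes S \<and> q j = j} = {q. q permutes S - {j}}"
    using j unfolding permutes_def by (auto; metis DiffE DiffI singletonD)
  also have "(\<Sum>q | q permutes S - {j}. ?F q)
      = (\<Sum>q | q permutes S - {j}. - (M k j * M j k) * (of_int (sign q) * (\<Prod>i\<in>S - {j}. M i (q i))))"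
    using sign_prod_transpose_pendant[OF S k j] by simp
  finally show ?thesis by (simp only: det_on_def sum_distrib_left)
qed

lemma det_on_insert_pendant:
  fixes M :: "'a \<Rightarrow> 'a \<Rightarrow> complex"
  assumes S: "finite S" and k: "k \<notin> S" and j: "j \<in> S" and diag: "M k k = 1"
    and row: "\<And>i. i \<in> S - {j} \<Longrightarrow> M k i = 0"
    and col: "\<And>i. i \<in> S - {j} \<Longrightarrow> M i k = 0"
  shows "det_on (insert k S) M = det_on S M - M k j * M j k * det_on (S - {j}) M"
proof -
  define F where "F p = of_int (sign p) * (\<Prod>i\<in>insert k S. M i (p i))" for p
  define G where "G c = (\<Sum>q | q permutes S. F (Transposition.transpose k c \<circ> q))" for c
  have "det_on (insert k S) M = (\<Sum>c\<in>insert k S. G c)"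
    unfolding det_on_def F_def G_def by (rule sum_over_permutations_insert[OF S k])
  also have "\<dots> = G k + G j + (\<Sum>c\<in>S - {j}. G c)"
    using S k j by (simp add: sum.remove)
  also have "(\<Sum>c\<in>S - {j}. G c) = 0"
  proof (intro sum.neutral ballI)
    fix c assume c: "c \<in> S - {j}"
    have "F (Transposition.transpose k c \<circ> q) = 0" if "q permutes S" for q
    proof -
      have "M k ((Transposition.transpose k c \<circ> q) k) = 0"
        using that k c row by (simp add: permutes_not_in)
      then show ?thesis unfolding F_def using S by (auto intro!: prod_zero)
    qed
    then show "G c = 0" unfolding G_def by simp
  qed
  also have "G k = det_on S M"
    unfolding G_def F_def det_on_def using S k diag by (intro sum.cong) (auto simp: permutes_not_in)
  also have "G j = - (M k j * M j k) * det_on (S - {j}) M"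
    unfolding G_def F_def by (intro sum_permutes_transpose_pendant S k j col)
  finally show ?thesis by simp
qed

section \<open>Unit tridiagonal matrices and their finite sections\<close>

definition unit_tridiagonal :: "(int \<Rightarrow> int \<Rightarrow> complex) \<Rightarrow> bool" where
  "unit_tridiagonal M \<longleftrightarrow> (\<forall>i. M i i = 1) \<and> (\<forall>i j. 1 < \<bar>i - j\<bar> \<longrightarrow> M i j = 0)"

definition tridiag_coupling :: "(int \<Rightarrow> int \<Rightarrow> complex) \<Rightarrow> int \<Rightarrow> complex" where
  "tridiag_coupling M k = M k (k + 1) * M (k + 1) k"

lemma det_on_interval_expand_right:
  assumes "unit_tridiagonal M" "a < b"
  shows "det_on {a..b} M = det_on {a..b-1} M - tridiag_coupling M (b-1) * det_on {a..b-2} M"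
proof -
  have "det_on (insert b {a..b-1}) M = det_on {a..b-1} M - M b (b-1) * M (b-1) b * det_on ({a..b-1} - {b-1}) M"
    using assms by (intro det_on_insert_pendant) (auto simp: unit_tridiagonal_def)
  moreover have "insert b {a..b-1} = {a..b}" "{a..b-1} - {b-1} = {a..b-2}" using assms by auto
  ultimately show ?thesis by (simp add: tridiag_coupling_def mult.commute)
qed

lemma det_on_interval_expand_left:
  assumes "unit_tridiagonal M" "a < b"
  shows "det_on {a..b} M = det_on {a+1..b} M - tridiag_coupling M a * det_on {a+2..b} M"
proof -
  have "det_on (insert a {a+1..b}) M = det_on {a+1..b} M - M a (a+1) * M (a+1) a * det_on ({a+1..b} - {a+1}) M"
    using assms by (intro det_on_insert_pendant) (auto simp: unit_tridiagonal_def)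
  moreover have "insert a {a+1..b} = {a..b}" "{a+1..b} - {a+1} = {a+2..b}" using assms by auto
  ultimately show ?thesis by (simp add: tridiag_coupling_def)
qed

lemma det_on_interval_trivial:
  assumes "unit_tridiagonal M" "b \<le> a"
  shows "det_on {a..b} M = 1"
proof (cases "b = a")
  case True then show ?thesis using assms by (simp add: unit_tridiagonal_def)
next
  case False then show ?thesis using assms by simp
qed

lemma det_on_interval_shift:
  fixes a b :: int
  shows "det_on {a+1..b+1} M = det_on {a..b} (\<lambda>i j. M (i + 1) (j + 1))"
proof -
  have "{a+1..b+1} = (\<lambda>i. i + 1) ` {a..b}" by simp
  then show ?thesis using det_on_reindex[of "\<lambda>i. i + 1" "{a..b}" M] by simp
qed

lemma norm_det_on_unit_tridiagonal_le:
  assumes M: "unit_tridiagonal M"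
  shows "norm (det_on {a..b} M) \<le> exp (\<Sum>k\<in>{a..<b}. norm (tridiag_coupling M k))"
proof (induction "nat (b - a)" arbitrary: b rule: less_induct)
  case less
  define E where "E b = exp (\<Sum>k\<in>{a..<b}. norm (tridiag_coupling M k))" for b
  show ?case
  proof (cases "a < b")
    case False
    then show ?thesis using det_on_interval_trivial[OF M] by (simp add: sum_nonneg)
  next
    case True
    let ?c = "norm (tridiag_coupling M (b-1))"
    have IH1: "norm (det_on {a..b-1} M) \<le> E (b-1)" and IH2: "norm (det_on {a..b-2} M) \<le> E (b-2)"
      using less True unfolding E_def by simp_all
    have "E (b-2) \<le> E (b-1)" unfolding E_def by (intro exp_mono sum_mono2) auto
    have "{a..<b} = insert (b-1) {a..<b-1}" using True by auto
    then have "E b = E (b-1) * exp ?c" unfolding E_def by (simp add: exp_add)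
    then have step: "E (b-1) * (1 + ?c) \<le> E b" unfolding E_def by (simp add: exp_ge_add_one_self)
    have "norm (det_on {a..b} M) \<le> norm (det_on {a..b-1} M) + ?c * norm (det_on {a..b-2} M)"
      unfolding det_on_interval_expand_right[OF M True] by (metis norm_mult norm_triangle_ineq4)
    also have "\<dots> \<le> E (b-1) + ?c * E (b-1)"
      using IH1 IH2 \<open>E (b-2) \<le> E (b-1)\<close> by (intro add_mono mult_left_mono) auto
    also have "\<dots> \<le> E b" using step by (simp add: algebra_simps)
    finally show ?thesis unfolding E_def .
  qed
qed

lemma sum_symmetric_int_interval_le:
  fixes f :: "int \<Rightarrow> real"
  assumes f: "\<And>k. 0 \<le> f k"
  shows "(\<Sum>k\<in>{- int N..int N}. f k) \<le> (\<Sum>j\<le>N. f (int j)) + (\<Sum>j\<le>N. f (- int j))"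
proof -
  let ?P = "int ` {..N}" and ?Q = "(\<lambda>j. - int j) ` {..N}"
  have "{- int N..int N} \<subseteq> ?P \<union> ?Q"
  proof
    fix k assume "k \<in> {- int N..int N}"
    then show "k \<in> ?P \<union> ?Q"
      by (cases "0 \<le> k") (auto simp: image_iff intro!: bexI[where x = "nat \<bar>k\<bar>"])
  qed
  then have "(\<Sum>k\<in>{- int N..int N}. f k) \<le> (\<Sum>k\<in>?P \<union> ?Q. f k)"
    using f by (intro sum_mono2) auto
  also have "\<dots> \<le> (\<Sum>k\<in>?P. f k) + (\<Sum>k\<in>?Q. f k)"
    using sum.union_inter[of ?P ?Q f] sum_nonneg[of "?P \<inter> ?Q" f] f by simp
  also have "\<dots> = (\<Sum>j\<le>N. f (int j)) + (\<Sum>j\<le>N. f (- int j))"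
    by (simp add: sum.reindex inj_on_def)
  finally show ?thesis .
qed

lemma lim_eq_if_diff_tendsto_0:
  fixes X Y :: "nat \<Rightarrow> 'a::real_normed_vector"
  assumes "(\<lambda>n. X n - Y n) \<longlonglongrightarrow> 0"
  shows "lim X = lim Y"
proof -
  have "X \<longlonglongrightarrow> L \<longleftrightarrow> Y \<longlonglongrightarrow> L" for L
    using tendsto_diff[of X L sequentially "\<lambda>n. X n - Y n" 0] tendsto_add[of Y L sequentially "\<lambda>n. X n - Y n" 0] assms
    by auto
  then show ?thesis unfolding lim_def by simp
qed

lemma lim_det_on_shifted_sections:
  assumes M: "unit_tridiagonal M"
    and pos: "summable (\<lambda>j. norm (tridiag_coupling M (int j)))"
    and neg: "summable (\<lambda>j. norm (tridiag_coupling M (- int j)))"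
  shows "lim (\<lambda>N. det_on {- int N + 1..int N + 1} M) = lim (\<lambda>N. det_on {- int N..int N} M)"
proof -
  let ?c = "\<lambda>k. norm (tridiag_coupling M k)"
  define G where "G = (\<Sum>j. ?c (int j)) + (\<Sum>j. ?c (- int j))"
  have bound: "norm (det_on {a..b} M) \<le> exp G" if "- int N \<le> a" "b \<le> int N" for a b N
  proof -
    have "(\<Sum>k\<in>{a..<b}. ?c k) \<le> (\<Sum>k\<in>{- int N..int N}. ?c k)"
      using that by (intro sum_mono2) auto
    also have "\<dots> \<le> (\<Sum>j\<le>N. ?c (int j)) + (\<Sum>j\<le>N. ?c (- int j))"
      by (rule sum_symmetric_int_interval_le) simp
    also have "\<dots> \<le> G"
      unfolding G_def using pos neg by (intro add_mono sum_le_suminf) auto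
    finally show ?thesis
      using norm_det_on_unit_tridiagonal_le[OF M, of a b] by (meson exp_le_cancel_iff order_trans)
  qed
  define X where "X N = det_on {- int N + 1..int N + 1} M" for N
  define Y where "Y N = det_on {- int N..int N} M" for N
  \<comment> \<open>Expanding \<open>{-N..N}\<close> along its first row and \<open>{-N+1..N+1}\<close> along its last one
    leaves the common block \<open>{-N+1..N}\<close>, so the difference is carried by two couplings.\<close>
  have diff: "norm (X N - Y N) \<le> (?c (- int N) + ?c (int N)) * exp G" if "1 \<le> N" for N
  proof -
    define n where "n = int N"
    have "Y N = det_on {-n+1..n} M - tridiag_coupling M (-n) * det_on {-n+2..n} M"
      using det_on_interval_expand_left[OF M, of "-n" n] that unfolding Y_def n_def by simp
    moreover have "X N = det_on {-n+1..n} M - tridiag_coupling M n * det_on {-n+1..n-1} M"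
      using det_on_interval_expand_right[OF M, of "-n+1" "n+1"] that unfolding X_def n_def by simp
    ultimately have "X N - Y N = tridiag_coupling M (-n) * det_on {-n+2..n} M
                                 - tridiag_coupling M n * det_on {-n+1..n-1} M"
      by simp
    then have "norm (X N - Y N) \<le> ?c (-n) * norm (det_on {-n+2..n} M) + ?c n * norm (det_on {-n+1..n-1} M)"
      by (metis norm_mult norm_triangle_ineq4)
    also have "\<dots> \<le> ?c (-n) * exp G + ?c n * exp G"
      using bound[of N] unfolding n_def by (intro add_mono mult_left_mono) auto
    finally show ?thesis unfolding n_def by (simp add: algebra_simps)
  qed
  have "(\<lambda>N. (?c (- int N) + ?c (int N)) * exp G) \<longlonglongrightarrow> (0 + 0) * exp G"
    using summable_LIMSEQ_zero[OF pos] summable_LIMSEQ_zero[OF neg] by (intro tendsto_intros)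
  then have "(\<lambda>N. X N - Y N) \<longlonglongrightarrow> 0"
    by (intro Lim_null_comparison[OF eventually_mono[OF eventually_ge_at_top[of "1::nat"] diff]]) auto
  then show ?thesis unfolding X_def Y_def by (rule lim_eq_if_diff_tendsto_0)
qed

section \<open>Estimates for the Gamma function\<close>

lemma norm_sin_ge: "exp \<bar>Im z\<bar> - 1 \<le> 2 * norm (sin z)"
proof -
  have "2 * norm (sin z) = norm (exp (\<i> * z) - exp (- (\<i> * z)))"
    by (simp add: sin_exp_eq norm_divide norm_mult)
  moreover have "\<bar>norm (exp (\<i> * z)) - norm (exp (- (\<i> * z)))\<bar> \<le> norm (exp (\<i> * z) - exp (- (\<i> * z)))"
    by (rule norm_triangle_ineq3)
  moreover have "exp \<bar>Im z\<bar> - 1 \<le> \<bar>exp (- Im z) - exp (Im z)\<bar>"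
    by (cases "0 \<le> Im z") auto
  ultimately show ?thesis by simp
qed

lemma norm_Gamma_reflection_le:
  fixes z :: complex
  assumes "1 \<le> \<bar>Im z\<bar>"
  shows "norm (Gamma z * Gamma (1 - z)) \<le> 4 * pi * exp (- pi * \<bar>Im z\<bar>)"
proof -
  define E where "E = exp (pi * \<bar>Im z\<bar>)"
  have "1 + pi \<le> exp pi" by (rule exp_ge_add_one_self)
  moreover have "exp pi \<le> E" unfolding E_def using assms by simp
  ultimately have "2 \<le> E" using pi_gt3 by linarith
  moreover have "E - 1 \<le> 2 * norm (sin (of_real pi * z))"
    using norm_sin_ge[of "of_real pi * z"] by (simp add: E_def abs_mult)
  ultimately have sin: "E / 4 \<le> norm (sin (of_real pi * z))" by linarith
  have "norm (Gamma z * Gamma (1 - z)) = pi / norm (sin (of_real pi * z))"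
    by (simp add: Gamma_reflection_complex norm_divide)
  also have "\<dots> \<le> pi / (E / 4)"
    using sin \<open>2 \<le> E\<close> by (intro divide_left_mono mult_pos_pos) auto
  also have "\<dots> = 4 * pi * exp (- pi * \<bar>Im z\<bar>)"
    by (simp add: E_def exp_minus field_simps)
  finally show ?thesis .
qed

lemma Gamma_uminus:
  fixes z :: complex
  assumes "z \<notin> \<int>"
  shows "Gamma (- z) = - Gamma (1 - z) / z"
proof -
  have "- z \<notin> \<int>\<^sub>\<le>\<^sub>0" using assms nonpos_Ints_subset_Ints Ints_minus by (metis minus_minus subsetD)
  then have "Gamma (1 - z) = - z * Gamma (- z)" using Gamma_plus1[of "- z"] by simp
  moreover have "z \<noteq> 0" using assms by auto
  ultimately show ?thesis by (simp add: field_simps)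
qed

section \<open>Symmetries of the secular determinant\<close>

definition mh_arg :: "real \<Rightarrow> complex \<Rightarrow> int \<Rightarrow> complex" where
  "mh_arg T s n = 1/2 - \<i> * (complex_of_real (mh_omega T * of_int n) + s)"

definition mh_Delta_matrix :: "real \<Rightarrow> complex \<Rightarrow> complex \<Rightarrow> real \<Rightarrow> int \<Rightarrow> int \<Rightarrow> complex" where
  "mh_Delta_matrix T s lam A n m = (if n = m then 1 else 0) - mh_fiber T s A n m / lam"

lemma mh_Delta_eq_lim_det_on:
  "mh_Delta T s lam A = lim (\<lambda>N. det_on {- int N..int N} (mh_Delta_matrix T s lam A))"
  unfolding mh_Delta_def fredholm_det_Z_def mh_Delta_matrix_def by simp

lemma mh_fiber_eq_Gamma_arg:
  "mh_fiber T s A n m = Gamma (mh_arg T s n) * mh_sfrak A (n - m) * Gamma (1 - mh_arg T s m)"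
  unfolding mh_fiber_def mh_arg_def by simp

lemma mh_arg_notin_Ints:
  assumes "s \<notin> mh_Lambda T"
  shows "mh_arg T s n \<notin> \<int>"
proof
  assume "mh_arg T s n \<in> \<int>"
  then obtain k where "mh_arg T s n = of_int k" by (elim Ints_cases)
  then have "s = complex_of_real (mh_omega T * of_int (- n)) + \<i> * (of_int (k - 1) + 1/2)"
    by (auto simp: mh_arg_def complex_eq_iff)
  then show False using assms unfolding mh_Lambda_def by blast
qed

lemma mh_Delta_matrix_neg:
  "mh_Delta_matrix T s (- lam) (- A) n m
     = (- 1) powi n * mh_Delta_matrix T s lam A n m / (- 1) powi m"
proof -
  consider "n = m" | "n - m = 1 \<or> n - m = - 1" | "n \<noteq> m" "n - m \<noteq> 1" "n - m \<noteq> - 1" by blast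
  then show ?thesis
  proof cases
    case 2
    then have "(- 1 :: complex) powi n / (- 1) powi m = - 1" by (auto simp: power_int_diff[symmetric])
    then have "(- 1) powi n * mh_Delta_matrix T s lam A n m / (- 1) powi m = - mh_Delta_matrix T s lam A n m"
      by (subst times_divide_eq_left[symmetric]) simp
    with 2 show ?thesis by (auto simp: mh_Delta_matrix_def mh_fiber_def mh_sfrak_def)
  qed (simp_all add: mh_Delta_matrix_def mh_fiber_def mh_sfrak_def)
qed

lemma mh_Delta_neg: "mh_Delta T s lam A = mh_Delta T s (- lam) (- A)"
  unfolding mh_Delta_eq_lim_det_on mh_Delta_matrix_neg by (simp add: det_on_diagonal_similar)

lemma mh_fiber_shift_i:
  assumes "s \<notin> mh_Lambda T"
  shows "mh_fiber T (s + \<i>) A n m = - (mh_arg T s n / mh_arg T s m) * mh_fiber T s A n m"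
proof -
  have "mh_arg T (s + \<i>) k = mh_arg T s k + 1" for k by (simp add: mh_arg_def algebra_simps)
  moreover have "Gamma (mh_arg T s n + 1) = mh_arg T s n * Gamma (mh_arg T s n)"
    using mh_arg_notin_Ints[OF assms] nonpos_Ints_subset_Ints by (intro Gamma_plus1) blast
  moreover have "Gamma (1 - (mh_arg T s m + 1)) = - Gamma (1 - mh_arg T s m) / mh_arg T s m"
    using Gamma_uminus[OF mh_arg_notin_Ints[OF assms]] by simp
  ultimately show ?thesis unfolding mh_fiber_eq_Gamma_arg by (simp add: field_simps)
qed

lemma mh_Delta_matrix_shift_i:
  assumes "s \<notin> mh_Lambda T"
  shows "mh_Delta_matrix T (s + \<i>) lam 0 n m
     = ((- 1) powi n * mh_arg T s n) * mh_Delta_matrix T s lam 0 n m / ((- 1) powi m * mh_arg T s m)"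
proof -
  have a: "mh_arg T s k \<noteq> 0" for k using mh_arg_notin_Ints[OF assms, of k] by auto
  consider "n - m = 1 \<or> n - m = - 1" | "n - m \<noteq> 1" "n - m \<noteq> - 1" by blast
  then show ?thesis
  proof cases
    case 1
    then have "(- 1 :: complex) powi n / (- 1) powi m = - 1" by (auto simp: power_int_diff[symmetric])
    then have "((- 1) powi n * mh_arg T s n) * X / ((- 1) powi m * mh_arg T s m)
             = - (mh_arg T s n / mh_arg T s m) * X" for X
      by (simp add: field_simps)
    with 1 show ?thesis by (auto simp: mh_Delta_matrix_def mh_fiber_shift_i[OF assms])
  next
    case 2
    then have "mh_fiber T s 0 n m = 0" by (simp add: mh_fiber_def mh_sfrak_def)
    with 2 a show ?thesis by (simp add: mh_Delta_matrix_def mh_fiber_shift_i[OF assms])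
  qed
qed

lemma mh_Delta_shift_i:
  assumes "s \<notin> mh_Lambda T"
  shows "mh_Delta T (s + \<i>) lam 0 = mh_Delta T s lam 0"
proof -
  have "mh_arg T s k \<noteq> 0" for k using mh_arg_notin_Ints[OF assms, of k] by auto
  then show ?thesis
    unfolding mh_Delta_eq_lim_det_on mh_Delta_matrix_shift_i[OF assms] by (simp add: det_on_diagonal_similar)
qed

lemma mh_Delta_matrix_shift_omega:
  "mh_Delta_matrix T (s + complex_of_real (mh_omega T)) lam A n m = mh_Delta_matrix T s lam A (n + 1) (m + 1)"
  unfolding mh_Delta_matrix_def mh_fiber_def by (simp add: algebra_simps)

lemma unit_tridiagonal_mh_Delta_matrix: "unit_tridiagonal (mh_Delta_matrix T s lam 0)"
  unfolding unit_tridiagonal_def mh_Delta_matrix_def mh_fiber_def mh_sfrak_def by auto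

lemma tridiag_coupling_mh_Delta_matrix:
  "tridiag_coupling (mh_Delta_matrix T s lam 0) k
     = (Gamma (mh_arg T s k) * Gamma (1 - mh_arg T s k))
       * (Gamma (mh_arg T s (k + 1)) * Gamma (1 - mh_arg T s (k + 1))) / (4 * lam\<^sup>2)"
  unfolding tridiag_coupling_def mh_Delta_matrix_def mh_fiber_eq_Gamma_arg
  by (simp add: mh_sfrak_def power2_eq_square)

lemma norm_Gamma_reflection_mh_arg_le:
  assumes "0 < mh_omega T" and "1 + \<bar>Re s\<bar> \<le> mh_omega T * \<bar>k\<bar>"
  shows "norm (Gamma (mh_arg T s k) * Gamma (1 - mh_arg T s k))
           \<le> 4 * pi * exp (pi * \<bar>Re s\<bar>) * exp (- pi * mh_omega T) ^ nat \<bar>k\<bar>"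
proof -
  have Im: "\<bar>Im (mh_arg T s k)\<bar> = \<bar>mh_omega T * k + Re s\<bar>"
    by (simp add: mh_arg_def abs_minus_commute)
  have "mh_omega T * \<bar>k\<bar> - \<bar>Re s\<bar> \<le> \<bar>mh_omega T * k + Re s\<bar>"
    using assms(1) by (simp add: abs_mult abs_triangle_ineq2_sym[of "Re s"] add.commute)
  then have lower: "mh_omega T * \<bar>k\<bar> - \<bar>Re s\<bar> \<le> \<bar>Im (mh_arg T s k)\<bar>" unfolding Im .
  have "norm (Gamma (mh_arg T s k) * Gamma (1 - mh_arg T s k)) \<le> 4 * pi * exp (- pi * \<bar>Im (mh_arg T s k)\<bar>)"
    using lower assms(2) by (intro norm_Gamma_reflection_le) simp
  also have "\<dots> \<le> 4 * pi * exp (- pi * (mh_omega T * \<bar>k\<bar> - \<bar>Re s\<bar>))"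
    using lower by simp
  also have "exp (- pi * (mh_omega T * \<bar>k\<bar> - \<bar>Re s\<bar>)) = exp (pi * \<bar>Re s\<bar>) * exp (- pi * mh_omega T) ^ nat \<bar>k\<bar>"
    by (simp add: exp_of_nat_mult[symmetric] exp_add[symmetric] algebra_simps)
  finally show ?thesis by (simp add: mult_ac)
qed

lemma summable_norm_tridiag_coupling_mh:
  assumes om: "0 < mh_omega T" and \<sigma>: "\<sigma> = 1 \<or> \<sigma> = - 1"
  shows "summable (\<lambda>j. norm (tridiag_coupling (mh_Delta_matrix T s lam 0) (\<sigma> * int j)))"
proof -
  define P where "P k = norm (Gamma (mh_arg T s k) * Gamma (1 - mh_arg T s k))" for k
  define B where "B = 4 * pi * exp (pi * \<bar>Re s\<bar>)"
  define \<rho> where "\<rho> = exp (- pi * mh_omega T)"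
  have \<rho>: "0 \<le> \<rho>" "\<rho> < 1" using om by (auto simp: \<rho>_def)
  obtain J :: nat where J: "(1 + \<bar>Re s\<bar>) / mh_omega T \<le> J" using real_arch_simple by blast
  have P_le: "P k \<le> B * \<rho> ^ nat \<bar>k\<bar>" if "int J \<le> \<bar>k\<bar>" for k
  proof -
    have "(1 + \<bar>Re s\<bar>) / mh_omega T \<le> \<bar>k\<bar>" using J that by linarith
    then have "1 + \<bar>Re s\<bar> \<le> mh_omega T * \<bar>k\<bar>" using om by (simp add: field_simps)
    then show ?thesis
      unfolding P_def B_def \<rho>_def using norm_Gamma_reflection_mh_arg_le[OF om, of s k] by simp
  qed
  define C where "C = B * B / (4 * norm lam ^ 2)"
  have bound: "norm (tridiag_coupling (mh_Delta_matrix T s lam 0) (\<sigma> * int j)) \<le> C * \<rho> ^ j"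
    if "J + 1 \<le> j" for j
  proof -
    have "int J \<le> \<bar>\<sigma> * int j\<bar>" "int J \<le> \<bar>\<sigma> * int j + 1\<bar>" "nat \<bar>\<sigma> * int j\<bar> = j"
      using \<sigma> that by auto
    then have "P (\<sigma> * int j) \<le> B * \<rho> ^ j" and "P (\<sigma> * int j + 1) \<le> B * \<rho> ^ nat \<bar>\<sigma> * int j + 1\<bar>"
      using P_le by metis+
    moreover have "B * \<rho> ^ nat \<bar>\<sigma> * int j + 1\<bar> \<le> B"
      using \<rho> by (intro mult_right_le_one_le power_le_one) (auto simp: B_def)
    ultimately have "P (\<sigma> * int j) * P (\<sigma> * int j + 1) \<le> B * \<rho> ^ j * B"
      using \<rho> by (intro mult_mono) (auto simp: P_def B_def intro: order_trans)
    then have "P (\<sigma> * int j) * P (\<sigma> * int j + 1) / (4 * norm lam ^ 2) \<le> B * \<rho> ^ j * B / (4 * norm lam ^ 2)"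
      by (rule divide_right_mono) simp
    moreover have "norm (tridiag_coupling (mh_Delta_matrix T s lam 0) (\<sigma> * int j))
                 = P (\<sigma> * int j) * P (\<sigma> * int j + 1) / (4 * norm lam ^ 2)"
      unfolding tridiag_coupling_mh_Delta_matrix P_def by (simp add: norm_mult norm_divide norm_power)
    ultimately show ?thesis by (simp add: C_def mult_ac)
  qed
  have "eventually (\<lambda>j. norm (norm (tridiag_coupling (mh_Delta_matrix T s lam 0) (\<sigma> * int j))) \<le> C * \<rho> ^ j) sequentially"
    using eventually_ge_at_top[of "J + 1"] by eventually_elim (use bound in simp)
  moreover have "summable (\<lambda>j. C * \<rho> ^ j)"
    using \<rho> by (intro summable_mult summable_geometric) simp
  ultimately show ?thesis by (rule summable_comparison_test_ev)
qed

lemma mh_Delta_shift_omega: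
  assumes "0 < mh_omega T"
  shows "mh_Delta T (s + complex_of_real (mh_omega T)) lam 0 = mh_Delta T s lam 0"
proof -
  define M where "M = mh_Delta_matrix T s lam 0"
  have "summable (\<lambda>j. norm (tridiag_coupling M (int j)))"
    and "summable (\<lambda>j. norm (tridiag_coupling M (- int j)))"
    using summable_norm_tridiag_coupling_mh[OF assms, of 1] summable_norm_tridiag_coupling_mh[OF assms, of "- 1"]
    unfolding M_def by simp_all
  then have "lim (\<lambda>N. det_on {- int N + 1..int N + 1} M) = lim (\<lambda>N. det_on {- int N..int N} M)"
    unfolding M_def by (intro lim_det_on_shifted_sections unit_tridiagonal_mh_Delta_matrix)
  moreover have "det_on {- int N..int N} (mh_Delta_matrix T (s + complex_of_real (mh_omega T)) lam 0)
      = det_on {- int N + 1..int N + 1} M" for N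
    unfolding M_def mh_Delta_matrix_shift_omega det_on_interval_shift ..
  ultimately show ?thesis unfolding mh_Delta_eq_lim_det_on M_def by simp
qed

section \<open>Dilations of L2(0,oo)\<close>

definition L2_dilation :: "real \<Rightarrow> (real \<Rightarrow> complex) \<Rightarrow> real \<Rightarrow> complex" where
  "L2_dilation c f t = complex_of_real (sqrt c) * f (c * t)"

lemma L2pos_L2_dilation:
  assumes c: "0 < c" and f: "L2pos f"
  shows "L2pos (L2_dilation c f)"
proof -
  define h where "h y = indicator {0<..} y *\<^sub>R (norm (f y))\<^sup>2" for y :: real
  have "integrable lborel h" using f unfolding L2pos_def set_integrable_def h_def by simp
  then have "integrable lborel (\<lambda>x. c *\<^sub>R h (0 + c * x))"
    using c by (intro integrable_scaleR_right lborel_integrable_real_affine) auto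
  also have "(\<lambda>x. c *\<^sub>R h (0 + c * x)) = (\<lambda>x. indicator {0<..} x *\<^sub>R (norm (L2_dilation c f x))\<^sup>2)"
    using c by (auto simp: h_def L2_dilation_def indicator_def norm_mult power_mult_distrib zero_less_mult_iff)
  finally have "set_integrable lborel {0<..} (\<lambda>x. (norm (L2_dilation c f x))\<^sup>2)"
    unfolding set_integrable_def .
  moreover have "f \<in> borel_measurable borel" using f unfolding L2pos_def by simp
  then have "L2_dilation c f \<in> borel_measurable lborel" unfolding L2_dilation_def by simp
  ultimately show ?thesis unfolding L2pos_def by simp
qed

lemma L2pos_normsq_L2_dilation:
  assumes c: "0 < c"
  shows "L2pos_normsq (L2_dilation c f) = L2pos_normsq f"
proof -
  define h where "h y = indicator {0<..} y *\<^sub>R (norm (f y))\<^sup>2" for y :: real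
  have "L2pos_normsq f = integral\<^sup>L lborel h"
    unfolding L2pos_normsq_def set_lebesgue_integral_def h_def ..
  also have "\<dots> = \<bar>c\<bar> *\<^sub>R integral\<^sup>L lborel (\<lambda>x. h (0 + c * x))"
    by (rule lborel_integral_real_affine) (use c in simp)
  also have "\<dots> = integral\<^sup>L lborel (\<lambda>x. c *\<^sub>R h (0 + c * x))" using c by simp
  also have "(\<lambda>x. c *\<^sub>R h (0 + c * x)) = (\<lambda>x. indicator {0<..} x *\<^sub>R (norm (L2_dilation c f x))\<^sup>2)"
    using c by (auto simp: h_def L2_dilation_def indicator_def norm_mult power_mult_distrib zero_less_mult_iff)
  finally show ?thesis unfolding L2pos_normsq_def set_lebesgue_integral_def by simp
qed

lemma L2_dilation_inverse:
  assumes "0 < c"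
  shows "L2_dilation c (L2_dilation (1 / c) g) = g"
  using assms by (simp add: L2_dilation_def fun_eq_iff real_sqrt_divide flip: of_real_mult)

lemma mh_kernel_dilation:
  assumes om: "0 < mh_omega T" and x: "0 < x"
  shows "mh_kernel T (- A) (exp (pi / mh_omega T) * x) = - mh_kernel T A x / exp (pi / mh_omega T)"
proof -
  have "mh_omega T * ln (exp (pi / mh_omega T) * x) = pi + mh_omega T * ln x"
    using om x by (simp add: ln_mult field_simps)
  then have "exp (\<i> * complex_of_real (mh_omega T * ln (exp (pi / mh_omega T) * x)))
           = - exp (\<i> * complex_of_real (mh_omega T * ln x))"
    by (simp add: distrib_left exp_add)
  then have "mh_symbol T (- A) (ln (exp (pi / mh_omega T) * x)) = - mh_symbol T A (ln x)"
    unfolding mh_symbol_def by simp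
  then show ?thesis unfolding mh_kernel_def using x by (simp add: field_simps)
qed

lemma hankel_op_mh_kernel_dilation:
  assumes om: "0 < mh_omega T" and t: "0 < t"
  defines "c \<equiv> exp (pi / mh_omega T)"
  shows "L2_dilation c (hankel_op (mh_kernel T (- A)) f) t = - hankel_op (mh_kernel T A) (L2_dilation c f) t"
proof -
  have c: "0 < c" unfolding c_def by simp
  define H where "H s = indicator {0<..} s *\<^sub>R (complex_of_real (mh_kernel T (- A) (c * t + s)) * f s)" for s
  define J where "J x = indicator {0<..} x *\<^sub>R (complex_of_real (mh_kernel T A (t + x)) * f (c * x))" for x
  have "H (0 + c * x) = (- 1 / c) *\<^sub>R J x" for x
  proof (cases "0 < x")
    case True
    have "mh_kernel T (- A) (c * t + c * x) = - mh_kernel T A (t + x) / c"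
      using mh_kernel_dilation[OF om, of "t + x" A] True t unfolding c_def by (simp add: distrib_left)
    then show ?thesis using True c unfolding H_def J_def by (simp add: zero_less_mult_iff scaleR_conv_of_real)
  next
    case False
    then show ?thesis using c unfolding H_def J_def by (simp add: zero_less_mult_iff)
  qed
  then have "hankel_op (mh_kernel T (- A)) f (c * t) = - integral\<^sup>L lborel J"
    using lborel_integral_real_affine[of c H 0] c
    unfolding hankel_op_def set_lebesgue_integral_def H_def[symmetric] by simp
  moreover have "hankel_op (mh_kernel T A) (L2_dilation c f) t = complex_of_real (sqrt c) * integral\<^sup>L lborel J"
    unfolding hankel_op_def set_lebesgue_integral_def J_def L2_dilation_def
    by (simp add: scaleR_conv_of_real mult.left_commute flip: integral_mult_right_zero)
  ultimately show ?thesis unfolding L2_dilation_def by simp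
qed

lemma unitarily_equiv_mh_hankel_neg:
  assumes om: "0 < mh_omega T"
  shows "unitarily_equiv_L2pos (hankel_op (mh_kernel T (- A))) (\<lambda>f t. - hankel_op (mh_kernel T A) f t)"
proof -
  define c where "c = exp (pi / mh_omega T)"
  have c: "0 < c" unfolding c_def by simp
  show ?thesis unfolding unitarily_equiv_L2pos_def
  proof (intro exI[of _ "L2_dilation c"] conjI allI impI)
    fix f assume "L2pos f"
    with c show "L2pos (L2_dilation c f)" by (rule L2pos_L2_dilation)
  next
    fix f g :: "real \<Rightarrow> complex" and k
    show "ae_eq_pos (L2_dilation c (\<lambda>x. f x + k * g x)) (\<lambda>x. L2_dilation c f x + k * L2_dilation c g x)"
      unfolding ae_eq_pos_def L2_dilation_def by (simp add: algebra_simps)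
  next
    fix f show "L2pos_normsq (L2_dilation c f) = L2pos_normsq f" using c by (rule L2pos_normsq_L2_dilation)
  next
    fix g assume "L2pos g"
    then have "L2pos (L2_dilation (1 / c) g)" using c by (intro L2pos_L2_dilation) simp_all
    moreover have "ae_eq_pos (L2_dilation c (L2_dilation (1 / c) g)) g"
      unfolding ae_eq_pos_def L2_dilation_inverse[OF c] by simp
    ultimately show "\<exists>f. L2pos f \<and> ae_eq_pos (L2_dilation c f) g" by blast
  next
    fix f
    show "ae_eq_pos (L2_dilation c (hankel_op (mh_kernel T (- A)) f))
                    (\<lambda>t. - hankel_op (mh_kernel T A) (L2_dilation c f) t)"
      unfolding ae_eq_pos_def c_def by (intro AE_I2 impI hankel_op_mh_kernel_dilation[OF om])
  qed
qed

theorem lemma8p2: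
  fixes T :: real
  assumes "0 < T"
  shows "(\<forall>s lam A. s \<notin> mh_Lambda T \<and> lam \<noteq> 0 \<longrightarrow>
            mh_Delta T s lam A = mh_Delta T s (- lam) (- A))
       \<and> (\<forall>A. unitarily_equiv_L2pos (hankel_op (mh_kernel T (- A)))
                                    (\<lambda>f t. - hankel_op (mh_kernel T A) f t))
       \<and> (\<forall>s lam. s \<notin> mh_Lambda T \<and> lam \<noteq> 0 \<longrightarrow>
            mh_Delta T (s + complex_of_real (mh_omega T)) lam 0 = mh_Delta T s lam 0
          \<and> mh_Delta T (s + \<i>) lam 0 = mh_Delta T s lam 0)"
proof -
  have "0 < mh_omega T" using assms by (simp add: mh_omega_def)
  then show ?thesis
    using mh_Delta_neg unitarily_equiv_mh_hankel_neg mh_Delta_shift_omega mh_Delta_shift_i by blast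
qed

end
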